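(* Let $\sim$ and $\sim'$ be right congruences on $\Sigma^*$. (a) If $\sim'$ is coarser than $\sim$ (i.e. $\sim\subseteq\sim'$) and $\sim$ has no critical tuple, then $\sim'$ has no critical tuple. (b) If $\sim$ and $\sim'$ both have no critical tuple, then $\sim\cap\sim'$ is a right congruence which has no critical tuple.
   Context: A right congruence on $\Sigma^*$ is an equivalence $\sim$ with $x\sim y\Rightarrow xz\sim yz$. A critical tuple in a right congruence $\sim$ is $(u_2,v_2,u,v)$ with $|u_2|=|v_2|\ge1$, $u=u_1u_2$, $v=v_1v_2$ for some words $u_1,v_1$, and $u_2w\not\sim v_2w$ for all $w\in\{u,v\}^*$. *)

theory Defs
  imports Main
begin

definition right_congruence :: "'a list rel \<Rightarrow> bool" where
  "right_congruence R \<longleftrightarrow> equiv UNIV R \<and>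
     (\<forall>x y z. (x, y) \<in> R \<longrightarrow> (x @ z, y @ z) \<in> R)"

definition word_star :: "'a list set \<Rightarrow> 'a list set" where
  "word_star L = {concat ws | ws. set ws \<subseteq> L}"

definition critical_tuple :: "'a list rel \<Rightarrow> 'a list \<Rightarrow> 'a list \<Rightarrow> 'a list \<Rightarrow> 'a list \<Rightarrow> bool" where
  "critical_tuple R u2 v2 u v \<longleftrightarrow>
     length u2 = length v2 \<and> length u2 \<ge> 1 \<and>
     (\<exists>u1. u = u1 @ u2) \<and> (\<exists>v1. v = v1 @ v2) \<and>
     (\<forall>w \<in> word_star {u, v}. (u2 @ w, v2 @ w) \<notin> R)"

definition has_critical_tuple :: "'a list rel \<Rightarrow> bool" where
  "has_critical_tuple R \<longleftrightarrow> (\<exists>u2 v2 u v. critical_tuple R u2 v2 u v)"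

end

theory Submission
  imports Defs
begin

text \<open>Coarsening a relation can only destroy critical tuples, which gives (a). For (b), take a
  critical tuple \<open>(u\<^sub>2, v\<^sub>2, u, v)\<close> of \<open>R \<inter> R'\<close>. As \<open>R\<close> has none, some \<open>w\<^sub>1 \<in> {u, v}\<^sup>*\<close>
  gives \<open>u\<^sub>2 w\<^sub>1 R v\<^sub>2 w\<^sub>1\<close>. Shifting by \<open>w\<^sub>1\<close> yields the critical tuple
  \<open>(u\<^sub>2 w\<^sub>1, v\<^sub>2 w\<^sub>1, u w\<^sub>1, v w\<^sub>1)\<close> of \<open>R \<inter> R'\<close>, because \<open>{u w\<^sub>1, v w\<^sub>1}\<^sup>* \<subseteq> {u, v}\<^sup>*\<close>.
  As \<open>R'\<close> has no critical tuple, some \<open>w\<^sub>2 \<in> {u w\<^sub>1, v w\<^sub>1}\<^sup>*\<close> relates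
  \<open>u\<^sub>2 w\<^sub>1 w\<^sub>2\<close> and \<open>v\<^sub>2 w\<^sub>1 w\<^sub>2\<close> in \<open>R'\<close>; they are related in \<open>R\<close> as well, since \<open>R\<close> is a right
  congruence, contradicting criticality in \<open>R \<inter> R'\<close>.\<close>

lemma word_star_Nil: "[] \<in> word_star L"
  unfolding word_star_def by (intro CollectI exI[of _ "[]"]) auto

lemma word_star_singleton: "x \<in> L \<Longrightarrow> x \<in> word_star L"
  unfolding word_star_def by (intro CollectI exI[of _ "[x]"]) auto

lemma word_star_append:
  assumes "x \<in> word_star L" and "y \<in> word_star L"
  shows "x @ y \<in> word_star L"
proof -
  obtain xs ys where "x = concat xs" "set xs \<subseteq> L" "y = concat ys" "set ys \<subseteq> L"
    using assms unfolding word_star_def by blast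
  then show ?thesis
    unfolding word_star_def by (intro CollectI exI[of _ "xs @ ys"]) auto
qed

lemma word_star_subset:
  assumes "M \<subseteq> word_star L"
  shows "word_star M \<subseteq> word_star L"
proof
  fix x assume "x \<in> word_star M"
  then obtain ws where x: "x = concat ws" and "set ws \<subseteq> M"
    unfolding word_star_def by blast
  from \<open>set ws \<subseteq> M\<close> have "concat ws \<in> word_star L"
    using assms by (induction ws) (auto intro: word_star_Nil word_star_append)
  then show "x \<in> word_star L" using x by simp
qed

lemma right_congruence_Int:
  assumes "right_congruence R" and "right_congruence R'"
  shows "right_congruence (R \<inter> R')"
proof -
  have "equiv UNIV R" "equiv UNIV R'"
    using assms unfolding right_congruence_def by blast+
  then have "equiv UNIV (R \<inter> R')"
    by (intro equivI) (auto simp: equiv_def refl_on_def intro: sym_Int trans_Int)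
  then show ?thesis
    using assms unfolding right_congruence_def by blast
qed

lemma critical_tuple_change_rel:
  assumes "critical_tuple S u2 v2 u v"
  shows "critical_tuple R u2 v2 u v \<longleftrightarrow> (\<forall>w \<in> word_star {u, v}. (u2 @ w, v2 @ w) \<notin> R)"
  using assms unfolding critical_tuple_def by simp

lemma critical_tuple_antimono:
  assumes "critical_tuple R' u2 v2 u v" and "R \<subseteq> R'"
  shows "critical_tuple R u2 v2 u v"
  using assms unfolding critical_tuple_def by blast

lemma has_critical_tuple_antimono:
  "has_critical_tuple R' \<Longrightarrow> R \<subseteq> R' \<Longrightarrow> has_critical_tuple R"
  unfolding has_critical_tuple_def by (blast intro: critical_tuple_antimono)

lemma critical_tuple_append:
  assumes crit: "critical_tuple R u2 v2 u v" and w: "w \<in> word_star {u, v}"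
  shows "critical_tuple R (u2 @ w) (v2 @ w) (u @ w) (v @ w)"
proof -
  have "word_star {u @ w, v @ w} \<subseteq> word_star {u, v}"
    using w by (intro word_star_subset) (auto intro: word_star_append word_star_singleton)
  then have "w @ w' \<in> word_star {u, v}" if "w' \<in> word_star {u @ w, v @ w}" for w'
    using that w by (blast intro: word_star_append)
  then have "\<forall>w' \<in> word_star {u @ w, v @ w}. ((u2 @ w) @ w', (v2 @ w) @ w') \<notin> R"
    using crit unfolding critical_tuple_def by simp
  moreover obtain u1 v1 where "u = u1 @ u2" "v = v1 @ v2" "length u2 = length v2" "length u2 \<ge> 1"
    using crit unfolding critical_tuple_def by blast
  ultimately show ?thesis
    unfolding critical_tuple_def by simp
qed

lemma no_critical_tuple_Int:
  assumes cong: "right_congruence R"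
    and no_crit: "\<not> has_critical_tuple R" and no_crit': "\<not> has_critical_tuple R'"
  shows "\<not> has_critical_tuple (R \<inter> R')"
proof
  assume "has_critical_tuple (R \<inter> R')"
  then obtain u2 v2 u v where crit: "critical_tuple (R \<inter> R') u2 v2 u v"
    unfolding has_critical_tuple_def by blast
  have "\<not> critical_tuple R u2 v2 u v"
    using no_crit unfolding has_critical_tuple_def by blast
  then obtain w1 where w1: "w1 \<in> word_star {u, v}" and "(u2 @ w1, v2 @ w1) \<in> R"
    using critical_tuple_change_rel[OF crit] by blast
  then have R_ext: "((u2 @ w1) @ w2, (v2 @ w1) @ w2) \<in> R" for w2
    using cong unfolding right_congruence_def by blast
  have crit_shifted: "critical_tuple (R \<inter> R') (u2 @ w1) (v2 @ w1) (u @ w1) (v @ w1)"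
    using crit w1 by (rule critical_tuple_append)
  have "\<not> critical_tuple R' (u2 @ w1) (v2 @ w1) (u @ w1) (v @ w1)"
    using no_crit' unfolding has_critical_tuple_def by blast
  then obtain w2 where "w2 \<in> word_star {u @ w1, v @ w1}" and "((u2 @ w1) @ w2, (v2 @ w1) @ w2) \<in> R'"
    using critical_tuple_change_rel[OF crit_shifted] by blast
  then show False
    using R_ext critical_tuple_change_rel[OF crit_shifted, of "R \<inter> R'"] crit_shifted by blast
qed

theorem lemma17:
  fixes R R' :: "('a::finite) list rel"
  assumes "right_congruence R" and "right_congruence R'"
  shows "(R \<subseteq> R' \<and> \<not> has_critical_tuple R \<longrightarrow> \<not> has_critical_tuple R')
     \<and> (\<not> has_critical_tuple R \<and> \<not> has_critical_tuple R' \<longrightarrow>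
          right_congruence (R \<inter> R') \<and> \<not> has_critical_tuple (R \<inter> R'))"
  using has_critical_tuple_antimono right_congruence_Int[OF assms] no_critical_tuple_Int[OF assms(1)]
  by blast

end
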